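(* Let $\alpha\in\mathbb{R}$ with $\alpha\neq0$, $\beta\ge0$, $0<\mu\le1$, and define $h(\lambda)=\frac{\lambda(\lambda+\beta)^\mu}{(\lambda+\beta)^\mu+\alpha}$ for $\lambda\in\mathbb{C}$ with $\operatorname{Re}(\lambda)>0$. Assume either (a) $\alpha>0$, or (b) $\alpha<0$ and $\alpha+\beta^\mu\ge|\alpha|$. Then $|\arg(h(\lambda))|\le(1+\mu)|\arg(\lambda)|$ for all $\lambda$ with $\operatorname{Re}(\lambda)>0$.
   Context: Complex powers $z^\mu$ and arguments are taken with the principal branch. *)

theory Defs
  imports "HOL-Analysis.Analysis"
begin

definition hfun :: "real \<Rightarrow> real \<Rightarrow> real \<Rightarrow> complex \<Rightarrow> complex" where
  "hfun \<alpha> \<beta> \<mu> lam =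
     lam * (lam + of_real \<beta>) powr (of_real \<mu>) /
       ((lam + of_real \<beta>) powr (of_real \<mu>) + of_real \<alpha>)"

end

theory Submission
  imports Defs
begin

text \<open>
  Write \<open>h(\<lambda>) = \<lambda> q\<close> with \<open>w = (\<lambda> + \<beta>)\<^sup>\<mu>\<close> and \<open>q = w / (w + \<alpha>)\<close>.
  All these points lie in the right half-plane, where arguments add under multiplication
  and \<open>\<bar>Arg z\<bar> = arctan (\<bar>Im z\<bar> / Re z)\<close>. Shifting \<open>\<lambda>\<close> to the right by \<open>\<beta>\<close> does not
  increase the absolute argument and the power multiplies it by \<open>\<mu>\<close>. Since
  \<open>q = (\<bar>w\<bar>\<^sup>2 + \<alpha> Re w + \<i> \<alpha> Im w) / \<bar>w + \<alpha>\<bar>\<^sup>2\<close>, the bound \<open>\<bar>Arg q\<bar> \<le> \<bar>Arg w\<bar>\<close> amounts to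
  \<open>\<bar>\<alpha>\<bar> Re w \<le> \<bar>w\<bar>\<^sup>2 + \<alpha> Re w\<close>; for \<open>\<alpha> < 0\<close> this follows from \<open>\<bar>w\<bar> \<ge> \<beta>\<^sup>\<mu> \<ge> 2\<bar>\<alpha>\<bar>\<close>.
\<close>

lemma abs_Arg_eq_arctan: "Re z > 0 \<Longrightarrow> \<bar>Arg z\<bar> = arctan (\<bar>Im z\<bar> / Re z)"
  by (simp add: arg_conv_arctan abs_arctan)

lemma abs_Arg_le_abs_Arg_iff:
  assumes "Re z > 0" "Re w > 0"
  shows "\<bar>Arg z\<bar> \<le> \<bar>Arg w\<bar> \<longleftrightarrow> \<bar>Im z\<bar> / Re z \<le> \<bar>Im w\<bar> / Re w"
  using assms by (simp add: abs_Arg_eq_arctan arctan_le_iff)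

lemma Arg_mult_Re_pos:
  assumes "Re z > 0" "Re w > 0"
  shows "Arg (z * w) = Arg z + Arg w"
proof (rule Arg_times)
  have "\<bar>Arg z\<bar> < pi / 2" "\<bar>Arg w\<bar> < pi / 2"
    using assms Arg_Re_pos by blast+
  then show "Arg z + Arg w \<in> {-pi<..pi}" by auto
qed (use assms in auto)

lemma abs_Arg_add_real_le:
  assumes "Re z > 0" "b \<ge> 0"
  shows "\<bar>Arg (z + of_real b)\<bar> \<le> \<bar>Arg z\<bar>"
  using assms by (simp add: abs_Arg_le_abs_Arg_iff frac_le)

lemma Arg_powr_of_real:
  assumes "z \<noteq> 0" "0 \<le> \<mu>" "\<mu> \<le> 1"
  shows "Arg (z powr of_real \<mu>) = \<mu> * Arg z"
proof -
  have "-pi < \<mu> * Arg z"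
  proof (cases "Arg z \<ge> 0")
    case False
    then have "Arg z \<le> \<mu> * Arg z" using assms by (simp add: mult_le_cancel_right1)
    then show ?thesis using Arg_bounded[of z] by linarith
  qed (use assms pi_gt_zero in \<open>smt (verit) mult_nonneg_nonneg\<close>)
  moreover have "\<mu> * Arg z \<le> pi"
    using assms Arg_bounded[of z] by (smt (verit) mult_left_le_one_le mult_nonneg_nonpos pi_gt_zero)
  ultimately show ?thesis
    using assms by (simp add: powr_def Arg_exp Arg_eq_Im_Ln)
qed

lemma Re_powr_of_real_pos:
  assumes "Re z > 0" "0 \<le> \<mu>" "\<mu> \<le> 1"
  shows "Re (z powr of_real \<mu>) > 0"
proof -
  have z: "z \<noteq> 0" using assms by auto
  have "\<bar>Arg (z powr of_real \<mu>)\<bar> \<le> \<bar>Arg z\<bar>"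
    using assms z by (simp add: Arg_powr_of_real abs_mult mult_left_le_one_le)
  also have "\<dots> < pi / 2" using assms Arg_Re_pos by blast
  finally show ?thesis using z Arg_Re_pos by (simp add: powr_def)
qed

lemma Re_div_add_real:
  "Re (w / (w + of_real a)) = ((cmod w)\<^sup>2 + a * Re w) / (cmod (w + of_real a))\<^sup>2"
  unfolding cmod_power2 by (simp add: Re_divide power2_eq_square algebra_simps)

lemma Im_div_add_real:
  "Im (w / (w + of_real a)) = a * Im w / (cmod (w + of_real a))\<^sup>2"
  unfolding cmod_power2 by (simp add: Im_divide power2_eq_square algebra_simps)

lemma abs_mult_Re_le_norm_power2_add:
  assumes "Re w > 0" "a < 0 \<Longrightarrow> 2 * \<bar>a\<bar> \<le> cmod w"
  shows "\<bar>a\<bar> * Re w \<le> (cmod w)\<^sup>2 + a * Re w"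
proof (cases "a < 0")
  case True
  have "2 * \<bar>a\<bar> * Re w \<le> cmod w * cmod w"
    using assms True complex_Re_le_cmod[of w] by (intro mult_mono) auto
  then show ?thesis using True by (simp add: power2_eq_square)
qed simp

lemma
  assumes "Re w > 0" "a < 0 \<Longrightarrow> 2 * \<bar>a\<bar> \<le> cmod w"
  shows Re_div_add_real_pos: "Re (w / (w + of_real a)) > 0"
    and abs_Arg_div_add_real_le: "\<bar>Arg (w / (w + of_real a))\<bar> \<le> \<bar>Arg w\<bar>"
proof -
  define N where "N = (cmod w)\<^sup>2 + a * Re w"
  have dom: "\<bar>a\<bar> * Re w \<le> N"
    unfolding N_def using abs_mult_Re_le_norm_power2_add[OF assms] .
  have N: "N > 0"
  proof (cases "a = 0")
    case True
    then show ?thesis using assms by (auto simp: N_def)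
  next
    case False
    then have "\<bar>a\<bar> * Re w > 0" using assms by simp
    then show ?thesis using dom by linarith
  qed
  have "w + of_real a \<noteq> 0"
  proof
    assume "w + of_real a = 0"
    then have "w = - of_real a" by (simp add: eq_neg_iff_add_eq_0)
    then have "N = 0" by (simp add: N_def power2_eq_square)
    then show False using N by simp
  qed
  then have D: "(cmod (w + of_real a))\<^sup>2 > 0" by simp
  show Re: "Re (w / (w + of_real a)) > 0"
    using N D by (simp add: Re_div_add_real N_def[symmetric])
  have "\<bar>Im (w / (w + of_real a))\<bar> / Re (w / (w + of_real a)) = \<bar>a\<bar> * \<bar>Im w\<bar> / N"
    using D by (simp add: Re_div_add_real Im_div_add_real N_def[symmetric] abs_mult abs_divide)
  also have "\<dots> \<le> \<bar>Im w\<bar> / Re w"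
    using mult_right_mono[OF dom abs_ge_zero[of "Im w"]] N assms(1)
    by (simp add: divide_simps algebra_simps)
  finally show "\<bar>Arg (w / (w + of_real a))\<bar> \<le> \<bar>Arg w\<bar>"
    using Re assms(1) by (simp add: abs_Arg_le_abs_Arg_iff)
qed

theorem lemma3p3:
  fixes \<alpha> \<beta> \<mu> :: real and lam :: complex
  assumes "\<alpha> \<noteq> 0" and "\<beta> \<ge> 0" and "0 < \<mu>" and "\<mu> \<le> 1"
    and "\<alpha> > 0 \<or> (\<alpha> < 0 \<and> \<alpha> + \<beta> powr \<mu> \<ge> \<bar>\<alpha>\<bar>)"
    and "Re lam > 0"
  shows "\<bar>Arg (hfun \<alpha> \<beta> \<mu> lam)\<bar> \<le> (1 + \<mu>) * \<bar>Arg lam\<bar>"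
proof -
  define z where "z = lam + of_real \<beta>"
  define w where "w = z powr of_real \<mu>"
  have z: "Re z > 0" "\<bar>Arg z\<bar> \<le> \<bar>Arg lam\<bar>"
    using assms abs_Arg_add_real_le by (auto simp: z_def)
  have "z \<noteq> 0" using z by auto
  then have w: "Re w > 0" "Arg w = \<mu> * Arg z"
    using z assms by (auto simp: w_def Re_powr_of_real_pos Arg_powr_of_real)
  have "2 * \<bar>\<alpha>\<bar> \<le> cmod w" if "\<alpha> < 0"
  proof -
    have "\<beta> \<le> cmod z" using assms complex_Re_le_cmod[of z] by (simp add: z_def)
    then have "\<beta> powr \<mu> \<le> cmod z powr \<mu>" using assms by (simp add: powr_mono2)
    then show ?thesis using assms that by (simp add: w_def norm_powr_real_powr')
  qed
  note q = Re_div_add_real_pos[OF w(1) this] abs_Arg_div_add_real_le[OF w(1) this]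
  have "hfun \<alpha> \<beta> \<mu> lam = lam * (w / (w + of_real \<alpha>))"
    by (simp add: hfun_def w_def z_def)
  also have "Arg \<dots> = Arg lam + Arg (w / (w + of_real \<alpha>))"
    by (rule Arg_mult_Re_pos[OF assms(6) q(1)])
  finally have "\<bar>Arg (hfun \<alpha> \<beta> \<mu> lam)\<bar> \<le> \<bar>Arg lam\<bar> + \<bar>Arg w\<bar>"
    using q by linarith
  also have "\<dots> \<le> \<bar>Arg lam\<bar> + \<mu> * \<bar>Arg lam\<bar>"
    using w z assms(3) by (simp add: abs_mult mult_left_mono)
  finally show ?thesis by (simp add: algebra_simps)
qed

end
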